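(* Let $\mathcal P\subset\mathbb R^n$ be an $n$-dimensional convex polytope and consider $\dot x=Ax+a+Bu$, $x\in\mathcal P$, with $\operatorname{rank}(B)=n-1$, $(A,B)$ controllable and $\operatorname{int}\mathcal P\cap\mathcal O=\emptyset$. Let $z\in\mathcal P$. If $\mathcal B_z\cap\mathcal P\subset\mathcal O$, then $\mathcal B_z\cap\mathcal P$ and $\mathcal P\setminus\mathcal B_z$ are $\mathcal P$-invariant.
   Context: $\mathcal B=\operatorname{Im}(B)$, $\mathcal O=\{x:Ax+a\in\mathcal B\}$; $\beta$ is the unit normal to $\mathcal B$ with $\beta^T(Ax+a)\le0$ on $\mathcal P$; $\mathcal B_z=\{x\in\mathbb R^n:\beta^Tx=\beta^Tz\}$. A set $\mathcal A\subseteq\mathcal P$ is $\mathcal P$-invariant if for every $x_0\in\mathcal A$ and every piecewise continuous control $u$, every trajectory $\phi^u_t(x_0)$ that lies in $\mathcal P$ on an interval $[0,T]$ ($T<\infty$) or $[0,\infty)$ lies in $\mathcal A$ on the same interval. *)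

theory Defs
  imports "HOL-Analysis.Analysis"
begin

primrec matpow :: "real^'n^'n \<Rightarrow> nat \<Rightarrow> real^'n^'n" where
  "matpow A 0 = mat 1"
| "matpow A (Suc k) = A ** matpow A k"

text \<open>Kalman controllability: the controllability matrix [B, AB, ..., A^(n-1) B]
  has rank n, i.e. its columns span a space of dimension n.\<close>
definition controllable :: "real^'n^'n \<Rightarrow> real^'m^'n \<Rightarrow> bool" where
  "controllable A B \<longleftrightarrow>
     dim (\<Union>k\<in>{..<CARD('n)}. columns (matpow A k ** B)) = CARD('n)"

text \<open>Piecewise continuity on [0,T]: a finite partition 0 = t0 < ... < tk = T such
  that on each open piece u agrees with a function continuous on the closed piece
  (so one-sided limits exist at the partition points).\<close>
definition pc_on_interval :: "(real \<Rightarrow> 'a::topological_space) \<Rightarrow> real \<Rightarrow> bool" where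
  "pc_on_interval u T \<longleftrightarrow>
     (\<exists>S. finite S \<and> 0 \<in> S \<and> T \<in> S \<and> S \<subseteq> {0..T} \<and>
        (\<forall>p\<in>S. \<forall>q\<in>S. p < q \<and> {p<..<q} \<inter> S = {} \<longrightarrow>
           (\<exists>g. continuous_on {p..q} g \<and> (\<forall>t\<in>{p<..<q}. u t = g t))))"

definition piecewise_continuous :: "(real \<Rightarrow> 'a::topological_space) \<Rightarrow> bool" where
  "piecewise_continuous u \<longleftrightarrow> (\<forall>T\<ge>0. pc_on_interval u T)"

text \<open>x is the trajectory of xdot = A x + a + B u from x0 on the interval I (containing 0),
  as a (Caratheodory) solution of the integral equation.\<close>
definition is_traj ::
  "real^'n^'n \<Rightarrow> real^'n \<Rightarrow> real^'m^'n \<Rightarrow> (real \<Rightarrow> real^'m) \<Rightarrow> real^'n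
     \<Rightarrow> (real \<Rightarrow> real^'n) \<Rightarrow> real set \<Rightarrow> bool" where
  "is_traj A a B u x0 x I \<longleftrightarrow>
     x 0 = x0 \<and>
     (\<forall>t\<in>I. ((\<lambda>s. A *v x s + a + B *v u s) has_integral (x t - x0)) {0..t})"

definition P_invariant ::
  "real^'n^'n \<Rightarrow> real^'n \<Rightarrow> real^'m^'n \<Rightarrow> (real^'n) set \<Rightarrow> (real^'n) set \<Rightarrow> bool" where
  "P_invariant A a B P Q \<longleftrightarrow> Q \<subseteq> P \<and>
     (\<forall>x0\<in>Q. \<forall>u. piecewise_continuous u \<longrightarrow>
        (\<forall>x T. 0 \<le> T \<and> is_traj A a B u x0 x {0..T} \<and> (\<forall>t\<in>{0..T}. x t \<in> P)
               \<longrightarrow> (\<forall>t\<in>{0..T}. x t \<in> Q)) \<and>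
        (\<forall>x. is_traj A a B u x0 x {0..} \<and> (\<forall>t\<in>{0..}. x t \<in> P)
               \<longrightarrow> (\<forall>t\<in>{0..}. x t \<in> Q)))"

end

theory Submission
  imports Defs
begin

text \<open>Along a trajectory inside \<open>P\<close>, the function \<open>g t = \<beta> \<bullet> x t\<close> is a primitive of
  \<open>\<beta> \<bullet> (A x + a) \<le> 0\<close>, because \<open>\<beta>\<close> annihilates the input directions. The hyperplane
  \<open>\<beta> \<bullet> x = c\<close> misses the interior of \<open>P\<close>, so \<open>P\<close> lies on one side of it, and the affine
  function \<open>\<beta> \<bullet> (A x + a)\<close>, which vanishes where the hyperplane meets \<open>P\<close>, is bounded on
  the polytope by a multiple of the distance \<open>\<bar>\<beta> \<bullet> x - c\<bar>\<close> (check it at the vertices).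
  Hence \<open>\<bar>g - c\<bar>\<close> changes at a rate at most proportional to itself, and a Gronwall-type
  argument shows that it can neither leave nor reach zero in finite time.\<close>

definition is_primitive_on :: "(real \<Rightarrow> real) \<Rightarrow> (real \<Rightarrow> real) \<Rightarrow> real \<Rightarrow> bool" where
  "is_primitive_on g \<phi> T \<longleftrightarrow> (\<forall>t\<in>{0..T}. (\<phi> has_integral (g t - g 0)) {0..t})"

lemma is_primitive_on_affine:
  assumes "is_primitive_on g \<phi> T"
  shows "is_primitive_on (\<lambda>t. \<sigma> * g t + b) (\<lambda>s. \<sigma> * \<phi> s) T"
  unfolding is_primitive_on_def
proof
  fix t assume "t \<in> {0..T}"
  then have "(\<phi> has_integral (g t - g 0)) {0..t}"
    using assms unfolding is_primitive_on_def by blast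
  from has_integral_cmul[OF this, of \<sigma>]
  show "((\<lambda>s. \<sigma> * \<phi> s) has_integral \<sigma> * g t + b - (\<sigma> * g 0 + b)) {0..t}"
    by (simp add: algebra_simps)
qed

lemma is_primitive_on_has_integral:
  assumes prim: "is_primitive_on g \<phi> T" and t: "0 \<le> t1" "t1 \<le> t2" "t2 \<le> T"
  shows "(\<phi> has_integral (g t2 - g t1)) {t1..t2}"
proof -
  have i1: "(\<phi> has_integral (g t1 - g 0)) {0..t1}" and i2: "(\<phi> has_integral (g t2 - g 0)) {0..t2}"
    using prim t unfolding is_primitive_on_def by auto
  obtain j where j: "(\<phi> has_integral j) {t1..t2}"
    using integrable_subinterval_real[of \<phi> 0 t2 t1 t2] i2 t unfolding integrable_on_def by auto
  have "(\<phi> has_integral (g t1 - g 0 + j)) {0..t2}"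
    using has_integral_combine[OF t(1,2) i1 j] .
  then have "g t2 - g 0 = g t1 - g 0 + j"
    by (rule has_integral_unique[OF i2])
  with j show ?thesis by simp
qed

lemma is_primitive_on_mono:
  assumes "is_primitive_on g \<phi> T" "\<forall>s\<in>{0..T}. 0 \<le> \<phi> s" "0 \<le> t1" "t1 \<le> t2" "t2 \<le> T"
  shows "g t1 \<le> g t2"
proof -
  have "0 \<le> g t2 - g t1"
    by (rule has_integral_nonneg[OF is_primitive_on_has_integral[OF assms(1,3-5)]])
      (use assms(2-5) in auto)
  then show ?thesis by simp
qed

lemma real_interval_step_induct:
  fixes Q :: "real \<Rightarrow> bool"
  assumes "\<delta> > 0" "Q 0"
    and step: "\<And>t1 t2. 0 \<le> t1 \<Longrightarrow> t1 \<le> t2 \<Longrightarrow> t2 \<le> T \<Longrightarrow> t2 - t1 \<le> \<delta> \<Longrightarrow> Q t1 \<Longrightarrow> Q t2"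
    and "t \<in> {0..T}"
  shows "Q t"
proof -
  have "\<forall>t\<in>{0..T}. t \<le> real n * \<delta> \<longrightarrow> Q t" for n
  proof (induction n)
    case 0
    then show ?case using \<open>Q 0\<close> by auto
  next
    case (Suc n)
    show ?case
    proof (intro ballI impI)
      fix t assume t: "t \<in> {0..T}" "t \<le> real (Suc n) * \<delta>"
      show "Q t"
      proof (cases "t \<le> real n * \<delta>")
        case True
        then show ?thesis using Suc t by blast
      next
        case False
        have "0 \<le> real n * \<delta>" using \<open>\<delta> > 0\<close> by simp
        then have "Q (real n * \<delta>)" using Suc False t by auto
        then show ?thesis
          using step[of "real n * \<delta>" t] \<open>0 \<le> real n * \<delta>\<close> False t by (auto simp: algebra_simps)
      qed
    qed
  qed
  moreover obtain n where "t / \<delta> < real n" using reals_Archimedean2 by blast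
  then have "t \<le> real n * \<delta>" using \<open>\<delta> > 0\<close> by (simp add: field_simps)
  ultimately show ?thesis using assms(4) by blast
qed

text \<open>Over a step of length at most \<open>1 / (2 K + 2)\<close>, a quantity whose rate is bounded by
  \<open>K\<close> times itself changes by at most half of its value.\<close>

lemma step_length_mult_le_half:
  fixes K h :: real
  assumes "0 \<le> K" "h \<le> 1 / (2 * K + 2)"
  shows "h * K \<le> 1 / 2"
proof -
  have "h * K \<le> K / (2 * K + 2)" using mult_right_mono[OF assms(2,1)] by simp
  also have "\<dots> \<le> 1 / 2" using assms(1) by (simp add: field_simps)
  finally show ?thesis .
qed

lemma is_primitive_on_stays_zero:
  assumes prim: "is_primitive_on g \<phi> T" and "g 0 = 0" and K: "K \<ge> 0"
    and bound: "\<forall>s\<in>{0..T}. 0 \<le> \<phi> s \<and> \<phi> s \<le> K * g s" and "t \<in> {0..T}"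
  shows "g t = 0"
proof (rule real_interval_step_induct[where \<delta> = "1 / (2 * K + 2)" and Q = "\<lambda>t. g t = 0"])
  fix t1 t2 assume t: "0 \<le> t1" "t1 \<le> t2" "t2 \<le> T" "t2 - t1 \<le> 1 / (2 * K + 2)" "g t1 = 0"
  have mono: "g s \<le> g t2" if "s \<in> {t1..t2}" for s
    using is_primitive_on_mono[OF prim] bound that t by auto
  have "g t2 - g t1 \<le> (t2 - t1) * (K * g t2)"
  proof (rule has_integral_le[OF is_primitive_on_has_integral[OF prim t(1-3)]])
    show "((\<lambda>s. K * g t2) has_integral (t2 - t1) * (K * g t2)) {t1..t2}"
      using has_integral_const_real[of "K * g t2" t1 t2] t by simp
    fix s assume s: "s \<in> {t1..t2}"
    then have "\<phi> s \<le> K * g s" using bound t by auto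
    also have "\<dots> \<le> K * g t2" using mono[OF s] K by (rule mult_left_mono)
    finally show "\<phi> s \<le> K * g t2" .
  qed
  moreover have "0 \<le> g t2" using mono[of t1] t by simp
  moreover have "(t2 - t1) * K \<le> 1 / 2"
    using step_length_mult_le_half[OF K t(4)] .
  ultimately show "g t2 = 0"
    using t(5) mult_right_mono[of "(t2 - t1) * K" "1 / 2" "g t2"] by (simp add: algebra_simps)
qed (use assms in auto)

lemma is_primitive_on_stays_positive:
  assumes prim: "is_primitive_on g \<phi> T" and "g 0 > 0" and K: "K \<ge> 0"
    and bound: "\<forall>s\<in>{0..T}. \<phi> s \<le> 0 \<and> - \<phi> s \<le> K * g s" and "t \<in> {0..T}"
  shows "g t > 0"
proof (rule real_interval_step_induct[where \<delta> = "1 / (2 * K + 2)" and Q = "\<lambda>t. g t > 0"])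
  fix t1 t2 assume t: "0 \<le> t1" "t1 \<le> t2" "t2 \<le> T" "t2 - t1 \<le> 1 / (2 * K + 2)" "g t1 > 0"
  have mono: "g s \<le> g t1" if "s \<in> {t1..t2}" for s
    using is_primitive_on_mono[OF is_primitive_on_affine[OF prim, where \<sigma> = "-1" and b = 0]]
      bound that t by auto
  have "- (g t2 - g t1) \<le> (t2 - t1) * (K * g t1)"
  proof (rule has_integral_le[OF has_integral_neg[OF is_primitive_on_has_integral[OF prim t(1-3)]]])
    show "((\<lambda>s. K * g t1) has_integral (t2 - t1) * (K * g t1)) {t1..t2}"
      using has_integral_const_real[of "K * g t1" t1 t2] t by simp
    fix s assume s: "s \<in> {t1..t2}"
    then have "- \<phi> s \<le> K * g s" using bound t by auto
    also have "\<dots> \<le> K * g t1" using mono[OF s] K by (rule mult_left_mono)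
    finally show "- \<phi> s \<le> K * g t1" .
  qed
  moreover have "(t2 - t1) * K \<le> 1 / 2"
    using step_length_mult_le_half[OF K t(4)] .
  ultimately show "g t2 > 0"
    using t(5) mult_right_mono[of "(t2 - t1) * K" "1 / 2" "g t1"] by (simp add: algebra_simps)
qed (use assms in auto)

lemma is_primitive_on_level_invariant:
  assumes prim: "is_primitive_on g \<phi> T" and K: "K \<ge> 0"
    and bound: "\<forall>s\<in>{0..T}. \<phi> s \<le> 0 \<and> - \<phi> s \<le> K * \<bar>g s - c\<bar>"
    and side: "(\<forall>s\<in>{0..T}. g s \<le> c) \<or> (\<forall>s\<in>{0..T}. c \<le> g s)"
    and t: "t \<in> {0..T}"
  shows "g t = c \<longleftrightarrow> g 0 = c"
proof -
  have T: "0 \<in> {0..T}" using t by simp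
  have "-1 * g 0 + 0 \<le> -1 * g t + 0"
    by (rule is_primitive_on_mono[OF is_primitive_on_affine[OF prim]]) (use bound t in auto)
  then have decreasing: "g t \<le> g 0" by simp
  from side show ?thesis
  proof
    assume below: "\<forall>s\<in>{0..T}. g s \<le> c"
    have "-1 * g t + c = 0" if "g 0 = c"
    proof (rule is_primitive_on_stays_zero[OF is_primitive_on_affine[OF prim] _ K _ t])
      show "-1 * g 0 + c = 0" using that by simp
      show "\<forall>s\<in>{0..T}. 0 \<le> -1 * \<phi> s \<and> -1 * \<phi> s \<le> K * (-1 * g s + c)"
        using bound below by (simp add: abs_of_nonpos)
    qed
    moreover have "g 0 \<le> c" using below T by blast
    ultimately show ?thesis using decreasing by linarith
  next
    assume above: "\<forall>s\<in>{0..T}. c \<le> g s"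
    have "1 * g t + - c > 0" if "g 0 \<noteq> c"
    proof (rule is_primitive_on_stays_positive[OF is_primitive_on_affine[OF prim] _ K _ t])
      show "1 * g 0 + - c > 0" using that above T by force
      show "\<forall>s\<in>{0..T}. 1 * \<phi> s \<le> 0 \<and> - (1 * \<phi> s) \<le> K * (1 * g s + - c)"
        using bound above by simp
    qed
    moreover have "c \<le> g t" using above t by blast
    ultimately show ?thesis using decreasing by force
  qed
qed

lemma convex_hull_affine_le_mult:
  fixes V :: "'a::real_inner set"
  assumes V: "finite V"
    and nonneg: "\<forall>x\<in>convex hull V. 0 \<le> q \<bullet> x + q0"
    and zero: "\<forall>x\<in>convex hull V. q \<bullet> x + q0 = 0 \<longrightarrow> p \<bullet> x + p0 \<le> 0"
  shows "\<exists>K\<ge>0. \<forall>y\<in>convex hull V. p \<bullet> y + p0 \<le> K * (q \<bullet> y + q0)"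
proof -
  define f where "f x = p \<bullet> x + p0" for x
  define d where "d x = q \<bullet> x + q0" for x
  define K where "K = (\<Sum>v\<in>V. \<bar>f v\<bar> / d v)"
  have VP: "V \<subseteq> convex hull V" by (rule hull_subset)
  have dv: "0 \<le> d v" if "v \<in> V" for v using nonneg VP that by (auto simp: d_def)
  have K0: "K \<ge> 0" unfolding K_def using dv by (auto intro: sum_nonneg)
  have fv: "f v \<le> K * d v" if v: "v \<in> V" for v
  proof (cases "d v = 0")
    case True
    then show ?thesis using zero VP v by (auto simp: f_def d_def)
  next
    case False
    then have "d v > 0" using dv v by force
    moreover have "\<bar>f v\<bar> / d v \<le> K" unfolding K_def
      by (rule member_le_sum[OF v]) (use dv V in auto)
    ultimately show ?thesis by (simp add: field_simps)
  qed
  have "f y \<le> K * d y" if "y \<in> convex hull V" for y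
  proof -
    obtain u where u: "\<forall>x\<in>V. 0 \<le> u x" "sum u V = 1" "(\<Sum>x\<in>V. u x *\<^sub>R x) = y"
      using \<open>y \<in> convex hull V\<close> convex_hull_finite[OF V] by auto
    have affine: "h \<bullet> y + h0 = (\<Sum>v\<in>V. u v * (h \<bullet> v + h0))" for h :: 'a and h0
    proof -
      have "h \<bullet> y + h0 = (\<Sum>v\<in>V. u v * (h \<bullet> v)) + (\<Sum>v\<in>V. u v) * h0"
        using u(2) by (simp add: u(3)[symmetric] inner_sum_right)
      also have "\<dots> = (\<Sum>v\<in>V. u v * (h \<bullet> v + h0))"
        by (simp add: sum_distrib_left sum_distrib_right sum.distrib algebra_simps)
      finally show ?thesis .
    qed
    have "f y = (\<Sum>v\<in>V. u v * f v)" using affine by (simp add: f_def)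
    also have "\<dots> \<le> (\<Sum>v\<in>V. u v * (K * d v))"
      using fv u by (intro sum_mono mult_left_mono) auto
    also have "\<dots> = K * (\<Sum>v\<in>V. u v * d v)" by (simp add: sum_distrib_left algebra_simps)
    also have "(\<Sum>v\<in>V. u v * d v) = d y" using affine by (simp add: d_def)
    finally show ?thesis .
  qed
  then show ?thesis using K0 by (auto simp: f_def d_def)
qed

lemma convex_hull_affine_le_mult_hyperplane_dist:
  fixes V :: "'a::real_inner set"
  assumes "finite V"
    and side: "(\<forall>x\<in>convex hull V. \<beta> \<bullet> x \<le> c) \<or> (\<forall>x\<in>convex hull V. c \<le> \<beta> \<bullet> x)"
    and zero: "\<forall>x\<in>convex hull V. \<beta> \<bullet> x = c \<longrightarrow> p \<bullet> x + p0 \<le> 0"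
  shows "\<exists>K\<ge>0. \<forall>x\<in>convex hull V. p \<bullet> x + p0 \<le> K * \<bar>\<beta> \<bullet> x - c\<bar>"
  using side
proof
  assume below: "\<forall>x\<in>convex hull V. \<beta> \<bullet> x \<le> c"
  obtain K where "K \<ge> 0" "\<forall>x\<in>convex hull V. p \<bullet> x + p0 \<le> K * ((- \<beta>) \<bullet> x + c)"
    using convex_hull_affine_le_mult[of V "- \<beta>" c p p0] assms below by auto
  moreover have "(- \<beta>) \<bullet> x + c = \<bar>\<beta> \<bullet> x - c\<bar>" if "x \<in> convex hull V" for x
    using below that by auto
  ultimately show ?thesis by auto
next
  assume above: "\<forall>x\<in>convex hull V. c \<le> \<beta> \<bullet> x"
  obtain K where "K \<ge> 0" "\<forall>x\<in>convex hull V. p \<bullet> x + p0 \<le> K * (\<beta> \<bullet> x + - c)"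
    using convex_hull_affine_le_mult[of V \<beta> "- c" p p0] assms above by auto
  moreover have "\<beta> \<bullet> x + - c = \<bar>\<beta> \<bullet> x - c\<bar>" if "x \<in> convex hull V" for x
    using above that by auto
  ultimately show ?thesis by auto
qed

lemma convex_one_side_of_hyperplane:
  fixes P :: "'a::euclidean_space set"
  assumes "convex P" "interior P \<noteq> {}" "interior P \<inter> {x. \<beta> \<bullet> x = c} = {}"
  shows "(\<forall>x\<in>P. \<beta> \<bullet> x \<le> c) \<or> (\<forall>x\<in>P. c \<le> \<beta> \<bullet> x)"
proof -
  have "connected (interior P)"
    using assms(1) by (simp add: convex_connected convex_interior)
  then have "{x. \<beta> \<bullet> x < c} \<inter> interior P = {} \<or> {x. \<beta> \<bullet> x > c} \<inter> interior P = {}"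
    by (rule connectedD) (use assms(3) in \<open>auto simp: open_halfspace_lt open_halfspace_gt\<close>)
  then have "interior P \<subseteq> {x. c \<le> \<beta> \<bullet> x} \<or> interior P \<subseteq> {x. \<beta> \<bullet> x \<le> c}"
    unfolding disjoint_iff subset_eq mem_Collect_eq by (meson not_less)
  then have "closure (interior P) \<subseteq> {x. c \<le> \<beta> \<bullet> x} \<or> closure (interior P) \<subseteq> {x. \<beta> \<bullet> x \<le> c}"
    using closure_minimal[OF _ closed_halfspace_ge] closure_minimal[OF _ closed_halfspace_le] by blast
  moreover have "P \<subseteq> closure (interior P)"
    using convex_closure_interior[OF assms(1,2)] closure_subset by blast
  ultimately show ?thesis by blast
qed

lemma is_traj_orthogonal_primitive:
  assumes traj: "is_traj A a B u x0 x {0..T}" and orth: "\<forall>y. \<beta> \<bullet> (B *v y) = 0"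
  shows "is_primitive_on (\<lambda>t. \<beta> \<bullet> x t) (\<lambda>s. \<beta> \<bullet> (A *v x s + a)) T"
  unfolding is_primitive_on_def
proof
  fix t assume "t \<in> {0..T}"
  then have "((\<lambda>s. A *v x s + a + B *v u s) has_integral (x t - x 0)) {0..t}"
    using traj unfolding is_traj_def by auto
  from has_integral_linear[OF this bounded_linear_inner_right[of \<beta>]]
  show "((\<lambda>s. \<beta> \<bullet> (A *v x s + a)) has_integral \<beta> \<bullet> x t - \<beta> \<bullet> x 0) {0..t}"
    using orth by (simp add: o_def inner_add_right inner_diff_right)
qed

text \<open>Invariance on every bounded horizon already gives invariance on \<open>[0,\<infinity>)\<close>, since a
  trajectory on \<open>[0,\<infinity>)\<close> restricts to one on each \<open>[0,t]\<close>.\<close>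

lemma P_invariantI:
  assumes "Q \<subseteq> P"
    and bounded: "\<And>u x0 x T t. x0 \<in> Q \<Longrightarrow> is_traj A a B u x0 x {0..T} \<Longrightarrow>
        \<forall>s\<in>{0..T}. x s \<in> P \<Longrightarrow> t \<in> {0..T} \<Longrightarrow> x t \<in> Q"
  shows "P_invariant A a B P Q"
  unfolding P_invariant_def
proof (intro conjI assms(1) ballI allI impI)
  fix x0 u x T t
  assume "x0 \<in> Q" "0 \<le> T \<and> is_traj A a B u x0 x {0..T} \<and> (\<forall>t\<in>{0..T}. x t \<in> P)" "t \<in> {0..T}"
  then show "x t \<in> Q" using bounded by blast
next
  fix x0 u x t
  assume "x0 \<in> Q" "is_traj A a B u x0 x {0..} \<and> (\<forall>t\<in>{0..}. x t \<in> P)" "t \<in> {0::real..}"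
  moreover have "is_traj A a B u x0 x {0..t}"
    using calculation(2) unfolding is_traj_def by auto
  ultimately show "x t \<in> Q" using bounded[of x0 u x t t] by auto
qed

theorem lemma4:
  fixes P :: "(real^'n) set" and A :: "real^'n^'n" and a :: "real^'n"
    and B :: "real^'m^'n" and \<beta> z :: "real^'n"
  assumes "polytope P" and "aff_dim P = int CARD('n)"
    and "rank B = CARD('n) - 1"
    and "controllable A B"
    and "interior P \<inter> {x. A *v x + a \<in> range ((*v) B)} = {}"
    and "norm \<beta> = 1" and "\<forall>y. \<beta> \<bullet> (B *v y) = 0"
    and "\<forall>x\<in>P. \<beta> \<bullet> (A *v x + a) \<le> 0"
    and "z \<in> P"
    and "{x. \<beta> \<bullet> x = \<beta> \<bullet> z} \<inter> P \<subseteq> {x. A *v x + a \<in> range ((*v) B)}"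
  shows "P_invariant A a B P ({x. \<beta> \<bullet> x = \<beta> \<bullet> z} \<inter> P)
       \<and> P_invariant A a B P (P - {x. \<beta> \<bullet> x = \<beta> \<bullet> z})"
proof -
  define c where "c = \<beta> \<bullet> z"
  obtain V where V: "finite V" "P = convex hull V" using assms(1) unfolding polytope_def by blast
  have drift: "\<beta> \<bullet> (A *v x + a) = (\<beta> v* A) \<bullet> x + \<beta> \<bullet> a" for x
    by (simp add: inner_add_right dot_lmul_matrix)
  have drift_zero: "\<beta> \<bullet> (A *v x + a) = 0" if "x \<in> P" "\<beta> \<bullet> x = c" for x
    using assms(7,10) that unfolding c_def by fastforce
  have nonempty_interior: "interior P \<noteq> {}"
    using assms(2,9) V interior_rel_interior_gen[of P] rel_interior_eq_empty[of P] by auto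
  have "interior P \<inter> {x. \<beta> \<bullet> x = c} = {}"
    using assms(5,10) interior_subset unfolding c_def by blast
  then have side: "(\<forall>x\<in>P. \<beta> \<bullet> x \<le> c) \<or> (\<forall>x\<in>P. c \<le> \<beta> \<bullet> x)"
    using convex_one_side_of_hyperplane[OF _ nonempty_interior] V by simp
  have "\<exists>K\<ge>0. \<forall>x\<in>convex hull V. (- (\<beta> v* A)) \<bullet> x + - (\<beta> \<bullet> a) \<le> K * \<bar>\<beta> \<bullet> x - c\<bar>"
  proof (rule convex_hull_affine_le_mult_hyperplane_dist)
    show "(\<forall>x\<in>convex hull V. \<beta> \<bullet> x \<le> c) \<or> (\<forall>x\<in>convex hull V. c \<le> \<beta> \<bullet> x)"
      using side V(2) by simp
    show "\<forall>x\<in>convex hull V. \<beta> \<bullet> x = c \<longrightarrow> (- (\<beta> v* A)) \<bullet> x + - (\<beta> \<bullet> a) \<le> 0"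
    proof (intro ballI impI)
      fix x assume "x \<in> convex hull V" "\<beta> \<bullet> x = c"
      then have "\<beta> \<bullet> (A *v x + a) = 0" using drift_zero V(2) by blast
      then show "(- (\<beta> v* A)) \<bullet> x + - (\<beta> \<bullet> a) \<le> 0" by (simp add: drift)
    qed
  qed (fact V(1))
  then obtain K where K: "K \<ge> 0" "\<forall>x\<in>P. - (\<beta> \<bullet> (A *v x + a)) \<le> K * \<bar>\<beta> \<bullet> x - c\<bar>"
    using V(2) by (auto simp: drift)
  have level: "\<beta> \<bullet> x t = c \<longleftrightarrow> \<beta> \<bullet> x0 = c"
    if "is_traj A a B u x0 x {0..T}" "\<forall>s\<in>{0..T}. x s \<in> P" "t \<in> {0..T}" for u x0 x T t
  proof -
    have "\<beta> \<bullet> x t = c \<longleftrightarrow> \<beta> \<bullet> x 0 = c"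
    proof (rule is_primitive_on_level_invariant[OF is_traj_orthogonal_primitive[OF that(1) assms(7)] K(1)])
      show "\<forall>s\<in>{0..T}. \<beta> \<bullet> (A *v x s + a) \<le> 0 \<and> - (\<beta> \<bullet> (A *v x s + a)) \<le> K * \<bar>\<beta> \<bullet> x s - c\<bar>"
        using that(2) assms(8) K(2) by blast
      show "(\<forall>s\<in>{0..T}. \<beta> \<bullet> x s \<le> c) \<or> (\<forall>s\<in>{0..T}. c \<le> \<beta> \<bullet> x s)"
        using that(2) side by blast
    qed (fact that(3))
    moreover have "x 0 = x0" using that(1) unfolding is_traj_def by blast
    ultimately show ?thesis by simp
  qed
  have "P_invariant A a B P ({x. \<beta> \<bullet> x = c} \<inter> P)"
    by (rule P_invariantI) (use level in auto)
  moreover have "P_invariant A a B P (P - {x. \<beta> \<bullet> x = c})"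
    by (rule P_invariantI) (use level in auto)
  ultimately show ?thesis unfolding c_def by blast
qed

end
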